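(* For $t\ge 0$ let $T_t:=e^{t(x\partial_x)^3}:\mathbb{R}[x]_{\leq 4}\to\mathbb{R}[x]_{\leq 4}$, i.e. $a_0+a_1x+a_2x^2+a_3x^3+a_4x^4\mapsto a_0+a_1e^tx+a_2e^{8t}x^2+a_3e^{27t}x^3+a_4e^{64t}x^4$. Then there exists a constant $\tau\in\mathbb{R}$ with $1.19688\cdot 10^{-2}<\tau<1.19689\cdot 10^{-2}$ such that (i) $T_t$ is not a positivity preserver for any $t\in(0,\tau)$, and (ii) $T_t$ is a positivity preserver for $t=0$ and for all $t\geq\tau$. In particular $(e^{t(x\partial_x)^3})_{t\ge0}$ on $\mathbb{R}[x]_{\le 4}$ is an eventually positive semi-group.
   Context: $\mathbb{R}[x]_{\le 4}$ denotes real univariate polynomials of degree at most $4$. Here "$T_t$ is a positivity preserver" means $T_t$ maps every polynomial $p\in\mathbb{R}[x]_{\le 4}$ with $p\ge 0$ on $\mathbb{R}$ to a polynomial that is $\ge 0$ on $\mathbb{R}$. A semi-group $(e^{tA})_{t\ge0}$ is called eventually positive if $e^{tA}$ is positive for all $t\ge\tau$ for some $\tau>0$ but not for $t\in(0,\tau)$. *)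

theory Defs
  imports Complex_Main "HOL-Computational_Algebra.Polynomial"
begin

definition T :: "real \<Rightarrow> real poly \<Rightarrow> real poly" where
  "T t p = (\<Sum>k\<le>4. monom (exp (t * real k ^ 3) * coeff p k) k)"

definition nonneg_poly :: "real poly \<Rightarrow> bool" where
  "nonneg_poly p \<longleftrightarrow> (\<forall>x::real. poly p x \<ge> 0)"

definition positivity_preserver :: "real \<Rightarrow> bool" where
  "positivity_preserver t \<longleftrightarrow>
     (\<forall>p. degree p \<le> 4 \<longrightarrow> nonneg_poly p \<longrightarrow> nonneg_poly (T t p))"

definition eventually_positive_sg :: "(real \<Rightarrow> bool) \<Rightarrow> bool" where
  "eventually_positive_sg P \<longleftrightarrow>
     (\<exists>\<tau>>0. (\<forall>t\<ge>\<tau>. P t) \<and> (\<forall>t. 0 < t \<and> t < \<tau> \<longrightarrow> \<not> P t))"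

end

theory Submission
  imports Defs
begin

text \<open>Evaluated at \<open>y\<close>, \<open>T\<^sub>t p\<close> is the functional \<open>L(p) = \<Sum> \<mu>\<^sub>k p\<^sub>k\<close> with moments
  \<open>\<mu>\<^sub>k = exp(t k\<^sup>3) y\<^sup>k\<close>. A nonnegative univariate polynomial is a nonnegative combination of
  squares, so \<open>L\<close> is nonnegative on nonnegative quartics iff its Hankel form on quadratics is
  positive semidefinite; since the substitution \<open>x \<mapsto> y x\<close> preserves this, \<open>T\<^sub>t\<close> is a positivity
  preserver iff the \<open>3 \<times> 3\<close> Hankel matrix of \<open>exp(t k\<^sup>3)\<close> is. For \<open>t > 0\<close> its leading
  \<open>2 \<times> 2\<close> minor is positive and its determinant is \<open>exp(24 t) (exp(6 t) - 1)\<^sup>2 h(exp(6 t))\<close> with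
  \<open>h(y) = y\<^sup>6 + y\<^sup>5 + y\<^sup>4 - y\<^sup>2 - 2 y - 1\<close>, which increases on \<open>[1, \<infinity>)\<close> through a single
  root \<open>y\<^sub>0\<close>. Hence \<open>\<tau> = ln(y\<^sub>0) / 6\<close>, located by evaluating \<open>h\<close> and Taylor bounds for \<open>exp\<close>.\<close>

lemma nonneg_poly_attains_min:
  fixes p :: "real poly"
  assumes nonneg: "\<forall>x. poly p x \<ge> 0" and deg: "degree p > 0"
  obtains x0 where "\<And>x. poly p x0 \<le> poly p x"
proof -
  have "filterlim (poly p) at_infinity at_infinity"
    by (rule filterlim_poly_at_infinity[OF deg])
  then have "\<forall>\<^sub>F x in at_infinity. norm (poly p 0) \<le> norm (poly p x)"
    by (auto simp: filterlim_at_infinity_conv_norm_at_top filterlim_at_top)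
  then obtain R where R: "\<And>x. norm x \<ge> R \<Longrightarrow> poly p 0 \<le> poly p x"
    using nonneg by (auto simp: eventually_at_infinity)
  have "continuous_on {-\<bar>R\<bar>..\<bar>R\<bar>} (poly p)"
    by (intro continuous_intros)
  moreover have "{-\<bar>R\<bar>..\<bar>R\<bar>} \<noteq> {}" by simp
  ultimately obtain x0 where x0: "x0 \<in> {-\<bar>R\<bar>..\<bar>R\<bar>}"
    "\<And>y. y \<in> {-\<bar>R\<bar>..\<bar>R\<bar>} \<Longrightarrow> poly p x0 \<le> poly p y"
    using continuous_attains_inf[OF compact_Icc] by blast
  have "poly p x0 \<le> poly p x" for x
  proof (cases "x \<in> {-\<bar>R\<bar>..\<bar>R\<bar>}")
    case False
    then have "poly p 0 \<le> poly p x" by (intro R) auto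
    then show ?thesis using x0(2)[of 0] by simp
  qed (use x0 in simp)
  then show thesis by (rule that)
qed

lemma nonneg_poly_split_at_min:
  fixes p :: "real poly"
  assumes nonneg: "\<forall>x. poly p x \<ge> 0" and deg: "degree p > 0"
  obtains m x0 r where "m \<ge> 0" "p = [:m:] + [:-x0, 1:]^2 * r"
    "\<forall>x. poly r x \<ge> 0" "degree p = degree r + 2"
proof -
  obtain x0 where min: "\<And>x. poly p x0 \<le> poly p x"
    using nonneg_poly_attains_min[OF assms] by blast
  define m where "m = poly p x0"
  define q where "q = p - [:m:]"
  have "poly (pderiv p) x0 = 0"
    using DERIV_local_min[OF poly_DERIV zero_less_one] min by blast
  have "poly q x0 = 0" by (simp add: q_def m_def)
  then obtain q1 where q1: "q = [:-x0, 1:] * q1"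
    by (metis dvdE poly_eq_0_iff_dvd)
  have "pderiv q = q1 + [:-x0, 1:] * pderiv q1"
    unfolding q1 pderiv_mult by (simp add: pderiv_pCons)
  then have "poly q1 x0 = 0"
    using \<open>poly (pderiv p) x0 = 0\<close> by (simp add: q_def pderiv_diff)
  then obtain r where r: "q1 = [:-x0, 1:] * r"
    by (metis dvdE poly_eq_0_iff_dvd)
  have "q = [:-x0, 1:]^2 * r"
    by (simp only: q1 r power2_eq_square mult.assoc)
  then have p_eq: "p = [:m:] + [:-x0, 1:]^2 * r"
    by (simp add: q_def)
  have r_pos: "poly r x \<ge> 0" if "x \<noteq> x0" for x
  proof -
    have "poly p x = m + (x - x0)^2 * poly r x"
      by (simp add: p_eq)
    then have "(x - x0)^2 * poly r x = poly p x - m"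
      by simp
    also have "\<dots> \<ge> 0" using min[of x] by (simp add: m_def)
    finally show ?thesis using that by (simp add: zero_le_mult_iff)
  qed
  have "poly r x0 \<ge> 0"
  proof (rule tendsto_lowerbound)
    show "(poly r \<longlongrightarrow> poly r x0) (at x0)"
      by (intro tendsto_intros)
    show "\<forall>\<^sub>F x in at x0. 0 \<le> poly r x"
      using r_pos by (auto simp: eventually_at_filter)
  qed simp
  then have "\<forall>x. poly r x \<ge> 0" using r_pos by metis
  moreover have "degree p = degree r + 2"
  proof -
    have "r \<noteq> 0" using deg p_eq by auto
    then have "degree ([:-x0, 1:]^2 * r) = degree r + 2"
      by (simp add: degree_mult_eq degree_power_eq)
    then show ?thesis
      unfolding p_eq using degree_add_eq_right[of "[:m:]" "[:-x0, 1:]^2 * r"] by simp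
  qed
  moreover have "m \<ge> 0" using nonneg by (simp add: m_def)
  ultimately show thesis using p_eq that by blast
qed

lemma functional_nonneg_on_const_poly:
  fixes L :: "real poly \<Rightarrow> real"
  assumes smult: "\<And>c p. L (smult c p) = c * L p" and one: "L 1 \<ge> 0"
    and nonneg: "\<forall>x. poly p x \<ge> 0" and deg: "degree p = 0"
  shows "L p \<ge> 0"
proof -
  obtain c where p: "p = [:c:]" using deg by (rule degree_eq_zeroE)
  have "c \<ge> 0" using nonneg[rule_format, of 0] by (simp add: p)
  then show ?thesis using smult[of c 1] one by (simp add: p)
qed

lemma functional_nonneg_on_nonneg_poly:
  fixes L :: "real poly \<Rightarrow> real"
  assumes add: "\<And>p q. L (p + q) = L p + L q"
    and smult: "\<And>c p. L (smult c p) = c * L p"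
    and squares: "\<And>q. degree q \<le> n \<Longrightarrow> L (q^2) \<ge> 0"
    and nonneg: "\<forall>x. poly p x \<ge> 0" and deg: "degree p \<le> 2 * n"
  shows "L p \<ge> 0"
  using assms
proof (induction n arbitrary: L p)
  case 0
  have "L 1 \<ge> 0" using "0.prems"(3)[of 1] by simp
  then show ?case using "0.prems" functional_nonneg_on_const_poly by simp
next
  case (Suc n)
  have one: "L 1 \<ge> 0" using Suc.prems(3)[of 1] by simp
  show ?case
  proof (cases "degree p = 0")
    case True
    then show ?thesis using Suc.prems one functional_nonneg_on_const_poly by blast
  next
    case False
    then obtain m x0 r where m: "m \<ge> 0" and p: "p = [:m:] + [:-x0, 1:]^2 * r"
      and r: "\<forall>x. poly r x \<ge> 0" and deg_r: "degree p = degree r + 2"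
      using nonneg_poly_split_at_min Suc.prems(4) by blast
    \<comment> \<open>The functional \<open>s \<mapsto> L((x - x0)\<^sup>2 s)\<close> satisfies the hypotheses one degree lower.\<close>
    define L' where "L' s = L ([:-x0, 1:]^2 * s)" for s
    have "L' r \<ge> 0"
    proof (rule Suc.IH)
      show "L' (s + s') = L' s + L' s'" for s s'
        by (simp add: L'_def distrib_left Suc.prems(1))
      show "L' (smult c s) = c * L' s" for c s
        by (simp add: L'_def Suc.prems(2))
      show "L' (q^2) \<ge> 0" if "degree q \<le> n" for q
      proof -
        have "degree ([:-x0, 1:] * q) \<le> Suc n"
          using degree_mult_le[of "[:-x0, 1:]" q] that by simp
        then have "L (([:-x0, 1:] * q)^2) \<ge> 0" by (rule Suc.prems(3))
        then show ?thesis unfolding L'_def power_mult_distrib .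
      qed
    qed (use r deg_r Suc.prems(5) in auto)
    moreover have "L [:m:] \<ge> 0"
      using functional_nonneg_on_const_poly[of L "[:m:]"] Suc.prems(2) one m by simp
    ultimately show ?thesis by (simp add: p Suc.prems(1) L'_def)
  qed
qed

definition moment_functional :: "(nat \<Rightarrow> real) \<Rightarrow> real poly \<Rightarrow> real" where
  "moment_functional \<mu> p = (\<Sum>k\<le>4. \<mu> k * coeff p k)"

definition hankel_form :: "(nat \<Rightarrow> real) \<Rightarrow> real \<Rightarrow> real \<Rightarrow> real \<Rightarrow> real" where
  "hankel_form \<mu> u0 u1 u2 =
     \<mu> 0 * u0^2 + 2 * \<mu> 1 * u0 * u1 + \<mu> 2 * (u1^2 + 2 * u0 * u2) + 2 * \<mu> 3 * u1 * u2 + \<mu> 4 * u2^2"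

lemma moment_functional_add:
  "moment_functional \<mu> (p + q) = moment_functional \<mu> p + moment_functional \<mu> q"
  by (simp add: moment_functional_def distrib_left sum.distrib)

lemma moment_functional_smult:
  "moment_functional \<mu> (smult c p) = c * moment_functional \<mu> p"
  by (simp add: moment_functional_def sum_distrib_left mult.left_commute)

lemma moment_functional_square:
  "moment_functional \<mu> ([:u0, u1, u2:]^2) = hankel_form \<mu> u0 u1 u2"
  by (simp add: moment_functional_def hankel_form_def power2_eq_square eval_nat_numeral
      algebra_simps)

lemma degree_le_2_poly_eq_coeffs:
  fixes q :: "'a::zero poly"
  assumes "degree q \<le> 2" shows "q = [:coeff q 0, coeff q 1, coeff q 2:]"
proof (rule poly_eqI)
  fix k
  show "coeff q k = coeff [:coeff q 0, coeff q 1, coeff q 2:] k"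
  proof (cases "k \<le> 2")
    case True
    then have "k = 0 \<or> k = 1 \<or> k = 2" by auto
    then show ?thesis by (auto simp: numeral_2_eq_2)
  next
    case False
    then have "k = Suc (Suc (Suc (k - 3)))" by simp
    moreover have "coeff q k = 0" using False assms by (intro coeff_eq_0) simp
    ultimately show ?thesis by (metis coeff_pCons_Suc coeff_0)
  qed
qed

lemma moment_functional_nonneg:
  assumes psd: "\<forall>u0 u1 u2. hankel_form \<mu> u0 u1 u2 \<ge> 0"
    and nonneg: "\<forall>x. poly p x \<ge> 0" and deg: "degree p \<le> 4"
  shows "moment_functional \<mu> p \<ge> 0"
proof (rule functional_nonneg_on_nonneg_poly[where n = 2])
  show "moment_functional \<mu> (q^2) \<ge> 0" if "degree q \<le> 2" for q
    using psd by (subst degree_le_2_poly_eq_coeffs[OF that]) (simp only: moment_functional_square)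
qed (use nonneg deg moment_functional_add moment_functional_smult in auto)

lemma poly_T: "poly (T t p) y = moment_functional (\<lambda>k. exp (t * real k ^ 3) * y^k) p"
  by (simp add: T_def moment_functional_def poly_sum poly_monom algebra_simps)

lemma hankel_form_scale:
  "hankel_form (\<lambda>k. \<mu> k * y^k) u0 u1 u2 = hankel_form \<mu> u0 (y * u1) (y^2 * u2)"
  by (simp add: hankel_form_def power2_eq_square eval_nat_numeral algebra_simps)

lemma positivity_preserver_iff_hankel_psd:
  "positivity_preserver t \<longleftrightarrow>
     (\<forall>u0 u1 u2. hankel_form (\<lambda>k. exp (t * real k ^ 3)) u0 u1 u2 \<ge> 0)"
proof
  assume pres: "positivity_preserver t"
  show "\<forall>u0 u1 u2. hankel_form (\<lambda>k. exp (t * real k ^ 3)) u0 u1 u2 \<ge> 0"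
  proof (intro allI)
    fix u0 u1 u2 :: real
    let ?q = "[:u0, u1, u2:]"
    have "degree ?q \<le> 2"
      using degree_pCons_le[of u0 "[:u1, u2:]"] degree_pCons_le[of u1 "[:u2:]"] by simp
    then have "degree (?q^2) \<le> 4"
      using degree_power_le[of ?q 2] by simp
    then have "poly (T t (?q^2)) 1 \<ge> 0"
      using pres by (auto simp: positivity_preserver_def nonneg_poly_def)
    then show "hankel_form (\<lambda>k. exp (t * real k ^ 3)) u0 u1 u2 \<ge> 0"
      by (simp add: poly_T moment_functional_square)
  qed
next
  assume psd: "\<forall>u0 u1 u2. hankel_form (\<lambda>k. exp (t * real k ^ 3)) u0 u1 u2 \<ge> 0"
  show "positivity_preserver t"
    unfolding positivity_preserver_def nonneg_poly_def
  proof (intro allI impI)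
    fix p :: "real poly" and y :: real
    assume "degree p \<le> 4" "\<forall>x. poly p x \<ge> 0"
    moreover have "\<forall>u0 u1 u2. hankel_form (\<lambda>k. exp (t * real k ^ 3) * y^k) u0 u1 u2 \<ge> 0"
      using psd by (simp add: hankel_form_scale)
    ultimately show "poly (T t p) y \<ge> 0"
      unfolding poly_T by (intro moment_functional_nonneg) auto
  qed
qed

definition hankel_det :: "(nat \<Rightarrow> real) \<Rightarrow> real" where
  "hankel_det \<mu> = \<mu> 0 * (\<mu> 2 * \<mu> 4 - \<mu> 3^2) - \<mu> 1 * (\<mu> 1 * \<mu> 4 - \<mu> 2 * \<mu> 3)
     + \<mu> 2 * (\<mu> 1 * \<mu> 3 - \<mu> 2^2)"

lemma hankel_form_nonneg_iff_det_nonneg: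
  assumes \<mu>0: "\<mu> 0 = 1" and pivot: "\<mu> 2 - \<mu> 1^2 > 0"
  shows "(\<forall>u0 u1 u2. hankel_form \<mu> u0 u1 u2 \<ge> 0) \<longleftrightarrow> hankel_det \<mu> \<ge> 0"
proof
  \<comment> \<open>\<open>(- \<mu>\<^sub>1 v1 - \<mu>\<^sub>2 v2, v1, v2)\<close> is the last column of the adjugate of the Hankel matrix.\<close>
  define v1 where "v1 = - (\<mu> 3 - \<mu> 1 * \<mu> 2)"
  define v2 where "v2 = \<mu> 2 - \<mu> 1^2"
  assume "\<forall>u0 u1 u2. hankel_form \<mu> u0 u1 u2 \<ge> 0"
  then have "hankel_form \<mu> (- (\<mu> 1 * v1 + \<mu> 2 * v2)) v1 v2 \<ge> 0" by blast
  also have "hankel_form \<mu> (- (\<mu> 1 * v1 + \<mu> 2 * v2)) v1 v2 = (\<mu> 2 - \<mu> 1^2) * hankel_det \<mu>"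
    unfolding hankel_form_def hankel_det_def v1_def v2_def \<mu>0 by algebra
  finally show "hankel_det \<mu> \<ge> 0" using pivot by (simp add: zero_le_mult_iff)
next
  assume det: "hankel_det \<mu> \<ge> 0"
  show "\<forall>u0 u1 u2. hankel_form \<mu> u0 u1 u2 \<ge> 0"
  proof (intro allI)
    fix u0 u1 u2
    define d where "d = \<mu> 2 - \<mu> 1^2"
    have "d > 0" using pivot by (simp add: d_def)
    have "\<mu> 2 = d + \<mu> 1^2" by (simp add: d_def)
    then have "hankel_form \<mu> u0 u1 u2 = (u0 + \<mu> 1 * u1 + \<mu> 2 * u2)^2
        + d * (u1 + (\<mu> 3 - \<mu> 1 * \<mu> 2) / d * u2)^2 + hankel_det \<mu> / d * u2^2"
      using \<open>d > 0\<close> unfolding hankel_form_def hankel_det_def \<mu>0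
      by (simp add: field_simps power2_eq_square)
    also have "\<dots> \<ge> 0" using \<open>d > 0\<close> det by simp
    finally show "hankel_form \<mu> u0 u1 u2 \<ge> 0" .
  qed
qed

definition hankel_det_factor :: "real \<Rightarrow> real" where
  "hankel_det_factor y = y^6 + y^5 + y^4 - y^2 - 2 * y - 1"

lemma hankel_det_cube_power_moments:
  "hankel_det (\<lambda>k. z ^ (k ^ 3)) = z^24 * (z^6 - 1)^2 * hankel_det_factor (z^6)"
  unfolding hankel_det_def hankel_det_factor_def by simp algebra

lemma hankel_det_exp_moments:
  "hankel_det (\<lambda>k. exp (t * real k ^ 3))
     = exp t ^ 24 * (exp (6 * t) - 1)^2 * hankel_det_factor (exp (6 * t))"
proof -
  have "exp (t * real k ^ 3) = exp t ^ (k ^ 3)" for k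
    using exp_of_nat_mult[of "k ^ 3" t] by (simp add: mult.commute)
  moreover have "exp (6 * t) = exp t ^ 6"
    using exp_of_nat_mult[of 6 t] by simp
  ultimately show ?thesis
    by (simp add: hankel_det_cube_power_moments)
qed

lemma positivity_preserver_iff_det_factor:
  assumes "t > 0"
  shows "positivity_preserver t \<longleftrightarrow> hankel_det_factor (exp (6 * t)) \<ge> 0"
proof -
  define \<mu> where "\<mu> = (\<lambda>k. exp (t * real k ^ 3))"
  have "\<mu> 1 ^ 2 < \<mu> 2"
    using assms by (simp add: \<mu>_def flip: exp_double)
  then have "positivity_preserver t \<longleftrightarrow> hankel_det \<mu> \<ge> 0"
    unfolding positivity_preserver_iff_hankel_psd \<mu>_def
    by (intro hankel_form_nonneg_iff_det_nonneg) (auto simp: \<mu>_def)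
  moreover have "exp t ^ 24 * (exp (6 * t) - 1)^2 > 0"
    using assms by simp
  ultimately show ?thesis
    by (simp add: \<mu>_def hankel_det_exp_moments zero_le_mult_iff)
qed

lemma positivity_preserver_0: "positivity_preserver 0"
proof -
  have "hankel_form (\<lambda>k. exp (0 * real k ^ 3)) u0 u1 u2 = (u0 + u1 + u2)^2" for u0 u1 u2
    by (simp add: hankel_form_def power2_eq_square algebra_simps)
  then show ?thesis
    unfolding positivity_preserver_iff_hankel_psd by simp
qed

lemma hankel_det_factor_strict_mono: "strict_mono_on {1..} hankel_det_factor"
proof (rule strict_mono_onI)
  fix y w :: real assume "y \<in> {1..}" "w \<in> {1..}" "y < w"
  define u v where "u = y - 1" and "v = w - 1"
  have uv: "0 \<le> u" "u < v" using \<open>y \<in> {1..}\<close> \<open>y < w\<close> by (auto simp: u_def v_def)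
  have "u ^ k \<le> v ^ k" for k using uv by (intro power_mono) auto
  moreover have "hankel_det_factor (1 + s) = -1 + 11*s + 30*s^2 + 34*s^3 + 21*s^4 + 7*s^5 + s^6" for s
    unfolding hankel_det_factor_def by algebra
  ultimately show "hankel_det_factor y < hankel_det_factor w"
    using uv by (simp add: u_def v_def) (smt (verit))
qed

lemma exp_ge_taylor:
  fixes x :: real assumes "0 \<le> x"
  shows "(\<Sum>m<n. x^m / fact m) \<le> exp x"
proof -
  obtain \<xi> where "exp x = (\<Sum>m<n. x^m / fact m) + exp \<xi> / fact n * x^n"
    using Maclaurin_exp_le[of x n] by blast
  then show ?thesis using assms by simp
qed

lemma exp_le_taylor:
  fixes x :: real assumes "0 \<le> x" "x \<le> 1"
  shows "exp x \<le> (\<Sum>m<n. x^m / fact m) + 3 * x^n / fact n"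
proof -
  obtain \<xi> where \<xi>: "\<bar>\<xi>\<bar> \<le> \<bar>x\<bar>" "exp x = (\<Sum>m<n. x^m / fact m) + exp \<xi> / fact n * x^n"
    using Maclaurin_exp_le[of x n] by blast
  have "exp \<xi> \<le> exp 1" using \<xi>(1) assms by simp
  then have "exp \<xi> \<le> 3" using exp_le by linarith
  then have "exp \<xi> / fact n * x^n \<le> 3 / fact n * x^n"
    using assms by (intro mult_right_mono divide_right_mono) auto
  then show ?thesis using \<xi>(2) by simp
qed

lemma exp_lower_threshold_bound: "exp (6 * 0.0119688 :: real) < 10744545 / 10^7"
proof -
  have "exp (6 * 0.0119688 :: real)
      \<le> (\<Sum>m<6. (6 * 0.0119688)^m / fact m) + 3 * (6 * 0.0119688)^6 / fact 6"
    by (rule exp_le_taylor) auto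
  also have "\<dots> < 10744545 / 10^7"
    by (simp add: eval_nat_numeral fact_numeral)
  finally show ?thesis .
qed

lemma exp_upper_threshold_bound: "10744547 / 10^7 < exp (6 * 0.0119689 :: real)"
proof -
  have "10744547 / 10^7 < (\<Sum>m<6. (6 * 0.0119689 :: real)^m / fact m)"
    by (simp add: eval_nat_numeral fact_numeral)
  also have "\<dots> \<le> exp (6 * 0.0119689 :: real)"
    by (rule exp_ge_taylor) auto
  finally show ?thesis .
qed

lemma positivity_threshold:
  obtains \<tau> :: real where "0.0119688 < \<tau>" "\<tau> < 0.0119689"
    "\<And>t. t > 0 \<Longrightarrow> positivity_preserver t \<longleftrightarrow> \<tau> \<le> t"
proof -
  define r1 r2 :: real where "r1 = 10744545 / 10^7" and "r2 = 10744547 / 10^7"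
  have "hankel_det_factor r1 < 0" "hankel_det_factor r2 > 0"
    by (simp_all add: r1_def r2_def hankel_det_factor_def power_divide)
  moreover have "continuous_on {r1..r2} hankel_det_factor"
    unfolding hankel_det_factor_def by (intro continuous_intros)
  ultimately obtain y0 where y0: "r1 \<le> y0" "y0 \<le> r2" "hankel_det_factor y0 = 0"
    using IVT'[of hankel_det_factor r1 0 r2] by (auto simp: r1_def r2_def)
  then have "r1 < y0" "y0 < r2"
    using \<open>hankel_det_factor r1 < 0\<close> \<open>hankel_det_factor r2 > 0\<close>
    by (auto simp: order.order_iff_strict)
  have "y0 > 1" using \<open>r1 < y0\<close> by (simp add: r1_def)
  define \<tau> where "\<tau> = ln y0 / 6"
  have exp_\<tau>: "exp (6 * \<tau>) = y0" using \<open>y0 > 1\<close> by (simp add: \<tau>_def)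
  have "exp (6 * 0.0119688) < exp (6 * \<tau>)" "exp (6 * \<tau>) < exp (6 * 0.0119689)"
    using exp_lower_threshold_bound exp_upper_threshold_bound \<open>r1 < y0\<close> \<open>y0 < r2\<close>
    by (simp_all add: exp_\<tau> r1_def r2_def)
  then have "0.0119688 < \<tau>" "\<tau> < 0.0119689" by simp_all
  moreover have "positivity_preserver t \<longleftrightarrow> \<tau> \<le> t" if "t > 0" for t
  proof -
    have "y0 \<in> {1..}" "exp (6 * t) \<in> {1..}" using that \<open>y0 > 1\<close> by auto
    then have "hankel_det_factor (exp (6 * t)) \<ge> hankel_det_factor y0 \<longleftrightarrow> exp (6 * t) \<ge> y0"
      by (rule strict_mono_on_less_eq[OF hankel_det_factor_strict_mono])
    moreover have "exp (6 * t) \<ge> y0 \<longleftrightarrow> \<tau> \<le> t"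
      by (simp flip: exp_\<tau>)
    ultimately show ?thesis
      by (simp add: positivity_preserver_iff_det_factor[OF that] y0(3))
  qed
  ultimately show thesis by (rule that)
qed

theorem proposition6p1:
  shows "\<exists>\<tau>::real. 0.0119688 < \<tau> \<and> \<tau> < 0.0119689
     \<and> (\<forall>t. 0 < t \<and> t < \<tau> \<longrightarrow> \<not> positivity_preserver t)
     \<and> positivity_preserver 0
     \<and> (\<forall>t\<ge>\<tau>. positivity_preserver t)
     \<and> eventually_positive_sg positivity_preserver"
proof -
  obtain \<tau> :: real where bounds: "0.0119688 < \<tau>" "\<tau> < 0.0119689"
    and threshold: "\<And>t. t > 0 \<Longrightarrow> positivity_preserver t \<longleftrightarrow> \<tau> \<le> t"
    using positivity_threshold by blast
  have neg: "\<forall>t. 0 < t \<and> t < \<tau> \<longrightarrow> \<not> positivity_preserver t"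
    using threshold by auto
  have pos: "\<forall>t\<ge>\<tau>. positivity_preserver t"
    using threshold bounds by auto
  have "eventually_positive_sg positivity_preserver"
    unfolding eventually_positive_sg_def using bounds neg pos by (intro exI[of _ \<tau>]) auto
  then show ?thesis
    using bounds neg pos positivity_preserver_0 by blast
qed

end
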